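(* For any weight data $A=(a_1,\dots,a_n)$, the weight assignment $Z_A$ is a smooth extremal assignment.
   Context: $[n]=\{1,\dots,n\}$. A stable $n$-labeled tree is a finite tree with $n$ leaves labeled bijectively by $[n]$, all internal vertices of degree $\ge 3$; $V(G)$ its internal vertices; $S(n)$ the set of such trees up to label-preserving isomorphism and $S_2(n)$ those with exactly 2 internal vertices. $G\rightsquigarrow G'$: $G'$ obtained by collapsing connected sets of internal vertices, inducing surjection $\pi:V(G)\to V(G')$; $v\rightsquigarrow v'$ means $\pi(v)=v'$. An extremal assignment of order $n$: rule $Z(G)\subset V(G)$ for $G\in S(n)$ with (a) $Z(G)\ne V(G)$, (b) if $G\rightsquigarrow G'$ and $\pi^{-1}(v')=\{v_1,\dots,v_k\}$ then $v'\in Z(G')\iff v_1,\dots,v_k\in Z(G)$. $Z$ is smooth if for every $G$ and $v\in Z(G)$ there exist $G'\in S_2(n)$, $v'\in Z(G')$ with $G\rightsquigarrow G'$, $v\rightsquigarrow v'$. Weight data: $A=(a_1,\dots,a_n)$ with $a_i\in\mathbb{Q}$, $0<a_i\le 1$, $\sum a_i>2$. A tail of $G$ is a nonempty connected set $T\subset V(G)$ joined to $V(G)\setminus T$ by exactly one edge; $\ell(T)$ is the set of labels of leaves adjacent to vertices of $T$. The weight assignment is $Z_A(G)=\{v\in V(G):\exists$ a tail $T$ of $G$ with $v\in T$ and $\sum_{i\in\ell(T)}a_i\le 1\}$; it is known to be an extremal assignment. *)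

theory Defs
  imports Complex_Main
begin

text \<open>A stable n-labeled tree, represented (for n \<ge> 3, where every leaf is adjacent
to exactly one internal vertex) by its set of internal vertices, the edges between
internal vertices (as two-element sets) and the map sending a label i to the
internal vertex adjacent to leaf i.\<close>

record stree =
  verts :: "nat set"
  edges :: "nat set set"
  leaf  :: "nat \<Rightarrow> nat"

definition adj_in :: "nat set set \<Rightarrow> nat set \<Rightarrow> (nat \<times> nat) set" where
  "adj_in E T = {(u, v). u \<in> T \<and> v \<in> T \<and> {u, v} \<in> E}"

definition connected_in :: "nat set set \<Rightarrow> nat set \<Rightarrow> bool" where
  "connected_in E T \<longleftrightarrow> T \<noteq> {} \<and> (\<forall>u\<in>T. \<forall>v\<in>T. (u, v) \<in> (adj_in E T)\<^sup>*)"

definition stable_tree :: "nat \<Rightarrow> stree \<Rightarrow> bool" where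
  "stable_tree n G \<longleftrightarrow>
     finite (verts G) \<and>
     edges G \<subseteq> {{u, v} | u v. u \<in> verts G \<and> v \<in> verts G \<and> u \<noteq> v} \<and>
     (\<forall>i\<in>{1..n}. leaf G i \<in> verts G) \<and>
     connected_in (edges G) (verts G) \<and>
     card (edges G) + 1 = card (verts G) \<and>
     (\<forall>v\<in>verts G. card {e\<in>edges G. v \<in> e} + card {i\<in>{1..n}. leaf G i = v} \<ge> 3)"

definition contracts :: "nat \<Rightarrow> stree \<Rightarrow> stree \<Rightarrow> (nat \<Rightarrow> nat) \<Rightarrow> bool" where
  "contracts n G G' \<pi> \<longleftrightarrow>
     stable_tree n G \<and> stable_tree n G' \<and>
     \<pi> ` verts G = verts G' \<and>
     (\<forall>v'\<in>verts G'. connected_in (edges G) {v\<in>verts G. \<pi> v = v'}) \<and>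
     (\<forall>i\<in>{1..n}. leaf G' i = \<pi> (leaf G i)) \<and>
     edges G' = {{\<pi> u, \<pi> v} | u v. {u, v} \<in> edges G \<and> \<pi> u \<noteq> \<pi> v}"

definition extremal_assignment :: "nat \<Rightarrow> (stree \<Rightarrow> nat set) \<Rightarrow> bool" where
  "extremal_assignment n Z \<longleftrightarrow>
     (\<forall>G. stable_tree n G \<longrightarrow> Z G \<subseteq> verts G \<and> Z G \<noteq> verts G) \<and>
     (\<forall>G G' \<pi>. contracts n G G' \<pi> \<longrightarrow>
        (\<forall>v'\<in>verts G'. v' \<in> Z G' \<longleftrightarrow> (\<forall>v\<in>verts G. \<pi> v = v' \<longrightarrow> v \<in> Z G)))"

definition smooth_assignment :: "nat \<Rightarrow> (stree \<Rightarrow> nat set) \<Rightarrow> bool" where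
  "smooth_assignment n Z \<longleftrightarrow>
     (\<forall>G v. stable_tree n G \<and> v \<in> Z G \<longrightarrow>
        (\<exists>G' \<pi>. card (verts G') = 2 \<and> contracts n G G' \<pi> \<and> \<pi> v \<in> Z G'))"

definition is_tail :: "stree \<Rightarrow> nat set \<Rightarrow> bool" where
  "is_tail G T \<longleftrightarrow> T \<subseteq> verts G \<and> connected_in (edges G) T \<and>
     card {e\<in>edges G. e \<inter> T \<noteq> {} \<and> e \<inter> (verts G - T) \<noteq> {}} = 1"

definition tail_labels :: "nat \<Rightarrow> stree \<Rightarrow> nat set \<Rightarrow> nat set" where
  "tail_labels n G T = {i\<in>{1..n}. leaf G i \<in> T}"

definition weight_data :: "nat \<Rightarrow> (nat \<Rightarrow> rat) \<Rightarrow> bool" where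
  "weight_data n a \<longleftrightarrow> (\<forall>i\<in>{1..n}. 0 < a i \<and> a i \<le> 1) \<and> (\<Sum>i\<in>{1..n}. a i) > 2"

definition weight_assignment :: "nat \<Rightarrow> (nat \<Rightarrow> rat) \<Rightarrow> stree \<Rightarrow> nat set" where
  "weight_assignment n a G =
     {v\<in>verts G. \<exists>T. is_tail G T \<and> v \<in> T \<and> (\<Sum>i\<in>tail_labels n G T. a i) \<le> 1}"

end

theory Submission
  imports Defs
begin

(* Deleting an edge {v, x} of a tree splits it into two branches, the component of v and
   the component of x, and the tails of a stable tree are exactly these branches.  As the
   total weight exceeds 2, at most one of the two branches of an edge is light (weight at
   most 1), and a vertex lies in Z_A(G) iff some edge at it has a light branch on its own
   side.  The heart of the proof is an extremal argument: if every vertex of a nonempty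
   set F has such an edge, take a maximal light branch based in F; its edge must leave F,
   since otherwise the light branch at its other end would strictly contain it.  With
   F = V(G) this shows Z_A(G) <> V(G).  For a contraction G ~> G', the preimage of a branch
   of G' is the branch of any lifted edge, with the same labels; applied to a fibre F this
   gives axiom (b).  Smoothness: collapsing the two branches of a light edge to one vertex
   each yields a stable two-vertex tree, because by the degree condition every branch
   carries at least two labels. *)

section \<open>Components of an edge set\<close>

definition edge_rel :: "'a set set \<Rightarrow> ('a \<times> 'a) set" where
  "edge_rel E = {(u, v). {u, v} \<in> E}"

definition reach :: "'a set set \<Rightarrow> 'a \<Rightarrow> 'a set" where
  "reach E u = (edge_rel E)\<^sup>* `` {u}"

definition branch :: "'a set set \<Rightarrow> 'a \<Rightarrow> 'a \<Rightarrow> 'a set" where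
  "branch E v x = reach (E - {{v, x}}) v"

definition inner_edges :: "'a set set \<Rightarrow> 'a set \<Rightarrow> 'a set set" where
  "inner_edges E X = {g\<in>E. g \<subseteq> X}"

lemma reach_self [simp]: "u \<in> reach E u"
  by (simp add: reach_def)

lemma reach_step: "z \<in> reach E u \<Longrightarrow> {z, z'} \<in> E \<Longrightarrow> z' \<in> reach E u"
  by (auto simp: reach_def edge_rel_def intro: rtrancl_into_rtrancl)

lemma reach_induct [consumes 1, case_names base step]:
  assumes "y \<in> reach E u" and "P u"
    and "\<And>z z'. z \<in> reach E u \<Longrightarrow> {z, z'} \<in> E \<Longrightarrow> P z \<Longrightarrow> P z'"
  shows "P y"
proof -
  have "(u, y) \<in> (edge_rel E)\<^sup>*" using assms(1) by (simp add: reach_def)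
  then show ?thesis
    by (induction rule: rtrancl_induct) (auto simp: reach_def edge_rel_def intro: assms(2,3))
qed

lemma reach_sym: "y \<in> reach E u \<Longrightarrow> u \<in> reach E y"
proof -
  have "sym ((edge_rel E)\<^sup>*)"
    by (rule sym_rtrancl) (auto simp: sym_def edge_rel_def insert_commute)
  then show "y \<in> reach E u \<Longrightarrow> u \<in> reach E y"
    by (auto simp: reach_def dest: symD)
qed

lemma reach_trans: "y \<in> reach E u \<Longrightarrow> z \<in> reach E y \<Longrightarrow> z \<in> reach E u"
  by (auto simp: reach_def)

lemma reach_eq: "y \<in> reach E u \<Longrightarrow> reach E y = reach E u"
  by (meson reach_sym reach_trans subsetI subset_antisym)

lemma reach_mono:
  assumes "E \<subseteq> E'"
  shows "reach E u \<subseteq> reach E' u"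
proof
  fix y assume "y \<in> reach E u"
  then show "y \<in> reach E' u"
    by (induction rule: reach_induct) (use assms in \<open>auto intro: reach_step\<close>)
qed

lemma reach_subset_Union: "reach E u \<subseteq> insert u (\<Union>E)"
proof
  fix y assume "y \<in> reach E u"
  then show "y \<in> insert u (\<Union>E)"
    by (induction rule: reach_induct) auto
qed

lemma reach_Diff_edge:
  assumes "f \<inter> reach E u = {}"
  shows "reach (E - {f}) u = reach E u"
proof
  show "reach E u \<subseteq> reach (E - {f}) u"
  proof
    fix y assume "y \<in> reach E u"
    then show "y \<in> reach (E - {f}) u"
    proof (induction rule: reach_induct)
      case (step z z')
      then have "{z, z'} \<in> E - {f}" using assms by blast
      with step.IH show ?case by (rule reach_step)
    qed simp
  qed
qed (rule reach_mono, blast)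

lemma reach_insert_edge: "reach (insert {a, b} E) a = reach E a \<union> reach E b"
proof
  show "reach (insert {a, b} E) a \<subseteq> reach E a \<union> reach E b"
  proof
    fix y assume "y \<in> reach (insert {a, b} E) a"
    then show "y \<in> reach E a \<union> reach E b"
    proof (induction rule: reach_induct)
      case (step z z')
      show ?case
      proof (cases "{z, z'} = {a, b}")
        case True
        then show ?thesis by (auto simp: doubleton_eq_iff)
      next
        case False
        then show ?thesis using step reach_step by (metis Un_iff insertE)
      qed
    qed simp
  qed
  have "b \<in> reach (insert {a, b} E) a" by (rule reach_step[OF reach_self]) simp
  then have "reach (insert {a, b} E) b = reach (insert {a, b} E) a" by (rule reach_eq)
  moreover have "reach E x \<subseteq> reach (insert {a, b} E) x" for x by (rule reach_mono) blast
  ultimately show "reach E a \<union> reach E b \<subseteq> reach (insert {a, b} E) a" by blast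
qed

lemma card_inner_edges_Un_disjoint:
  assumes "finite E" and "{} \<notin> E" and "X \<inter> Y = {}"
  shows "card (inner_edges E X \<union> inner_edges E Y) = card (inner_edges E X) + card (inner_edges E Y)"
proof (rule card_Un_disjoint)
  show "inner_edges E X \<inter> inner_edges E Y = {}"
  proof (rule ccontr)
    assume "inner_edges E X \<inter> inner_edges E Y \<noteq> {}"
    then obtain g where "g \<in> E" "g \<subseteq> X" "g \<subseteq> Y" by (auto simp: inner_edges_def)
    then have "g = {}" using assms(3) by blast
    with \<open>g \<in> E\<close> show False using assms(2) by simp
  qed
qed (use assms(1) in \<open>simp_all add: inner_edges_def\<close>)

lemma card_reach_insert_edge_le:
  assumes "finite E" and "\<forall>g\<in>E. card g = 2" and "{a, b} \<notin> E"
    and IH: "\<And>x. card (reach E x) \<le> card (inner_edges E (reach E x)) + 1"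
  shows "card (reach (insert {a, b} E) a)
    \<le> card (inner_edges (insert {a, b} E) (reach (insert {a, b} E) a)) + 1"
proof -
  let ?R = "reach (insert {a, b} E) a" and ?X = "reach E a" and ?Y = "reach E b"
  have R: "?R = ?X \<union> ?Y" by (rule reach_insert_edge)
  have fin: "finite (inner_edges (insert {a, b} E) ?R)"
    using assms(1) by (simp add: inner_edges_def)
  show ?thesis
  proof (cases "?X \<inter> ?Y = {}")
    case False
    then obtain z where z: "z \<in> ?X" "z \<in> ?Y" by blast
    have "b \<in> ?X" using reach_trans[OF z(1) reach_sym[OF z(2)]] .
    then have "?Y = ?X" by (rule reach_eq)
    then have "?R = ?X" using R by blast
    moreover have "card (inner_edges E ?X) \<le> card (inner_edges (insert {a, b} E) ?X)"
      using assms(1) by (intro card_mono) (auto simp: inner_edges_def)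
    ultimately show ?thesis using IH[of a] by simp
  next
    case True
    have "finite (\<Union>E)"
      using assms(2) by (intro finite_Union assms(1)) (simp add: card_ge_0_finite)
    then have "finite ?X" "finite ?Y"
      using reach_subset_Union finite_subset by (metis finite_insert)+
    then have "card ?R = card ?X + card ?Y" using R True by (simp add: card_Un_disjoint)
    moreover have "{} \<notin> E" using assms(2) by force
    then have "card (insert {a, b} (inner_edges E ?X \<union> inner_edges E ?Y))
        = card (inner_edges E ?X) + card (inner_edges E ?Y) + 1"
      using assms(1,3) card_inner_edges_Un_disjoint[OF assms(1) _ True]
      by (simp add: inner_edges_def)
    moreover have "insert {a, b} (inner_edges E ?X \<union> inner_edges E ?Y)
        \<subseteq> inner_edges (insert {a, b} E) ?R"
      using R by (auto simp: inner_edges_def)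
    then have "card (insert {a, b} (inner_edges E ?X \<union> inner_edges E ?Y))
        \<le> card (inner_edges (insert {a, b} E) ?R)"
      by (rule card_mono[OF fin])
    ultimately show ?thesis using IH[of a] IH[of b] by linarith
  qed
qed

text \<open>Adding an edge either keeps a component or merges two components along it.\<close>

lemma card_reach_le:
  assumes "finite E" and "\<forall>g\<in>E. card g = 2"
  shows "card (reach E u) \<le> card (inner_edges E (reach E u)) + 1"
  using assms
proof (induction E arbitrary: u rule: finite_induct)
  case empty
  have "reach {} u = {u}" using reach_subset_Union[of "{}" u] by auto
  then show ?case by simp
next
  case (insert e E)
  from insert.prems obtain a b where e: "e = {a, b}" by (meson card_2_iff insertI1)
  let ?R = "reach (insert e E) u"
  have IH: "card (reach E x) \<le> card (inner_edges E (reach E x)) + 1" for x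
    using insert by simp
  show ?case
  proof (cases "a \<in> ?R")
    case False
    then have "b \<notin> ?R" using reach_step[of b _ u a] e by (auto simp: insert_commute)
    with False have "reach (insert e E - {e}) u = ?R" using e by (intro reach_Diff_edge) auto
    then have R: "?R = reach E u" using insert.hyps by simp
    have "card (inner_edges E ?R) \<le> card (inner_edges (insert e E) ?R)"
      using insert.hyps by (intro card_mono) (auto simp: inner_edges_def)
    then show ?thesis using IH[of u] R by simp
  next
    case True
    then have "?R = reach (insert e E) a" by (rule reach_eq[symmetric])
    then show ?thesis
      using card_reach_insert_edge_le[of E a b] insert IH e by simp
  qed
qed

text \<open>Leave v for the last time on a walk from v to y.\<close>

lemma reach_last_exit:
  assumes "y \<in> reach E v" and "y \<noteq> v"
  shows "\<exists>x. {v, x} \<in> E \<and> y \<in> reach {g\<in>E. v \<notin> g} x"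
  using assms
proof (induction rule: reach_induct)
  case (step z z')
  show ?case
  proof (cases "z = v")
    case True
    then show ?thesis using step.hyps(2) by (intro exI[of _ z']) simp
  next
    case False
    then obtain x where "{v, x} \<in> E" "z \<in> reach {g\<in>E. v \<notin> g} x" using step.IH by blast
    moreover have "{z, z'} \<in> {g\<in>E. v \<notin> g}" using step.hyps(2) step.prems False by auto
    ultimately show ?thesis by (blast intro: reach_step)
  qed
qed simp

lemma sum_card_Collect_swap:
  assumes "finite S" and "finite E"
  shows "(\<Sum>u\<in>S. card {g\<in>E. R u g}) = (\<Sum>g\<in>E. card {u\<in>S. R u g})"
proof -
  have "(\<Sum>u\<in>S. card {g\<in>E. R u g}) = (\<Sum>u\<in>S. \<Sum>g\<in>E. of_bool (R u g))"
    using assms by (simp add: Int_def)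
  also have "\<dots> = (\<Sum>g\<in>E. \<Sum>u\<in>S. of_bool (R u g))" by (rule sum.swap)
  also have "\<dots> = (\<Sum>g\<in>E. card {u\<in>S. R u g})"
    using assms by (simp add: Int_def)
  finally show ?thesis .
qed

lemma sum_card_preimage:
  assumes "finite S" and "finite I"
  shows "(\<Sum>u\<in>S. card {i\<in>I. f i = u}) = card {i\<in>I. f i \<in> S}"
proof -
  have "(\<Sum>u\<in>S. card {i\<in>I. f i = u}) = (\<Sum>i\<in>I. card {u\<in>S. f i = u})"
    by (rule sum_card_Collect_swap[OF assms])
  also have "\<dots> = (\<Sum>i\<in>I. of_bool (f i \<in> S))"
  proof (rule sum.cong[OF refl])
    fix i
    have "{u\<in>S. f i = u} = (if f i \<in> S then {f i} else {})" by auto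
    then show "card {u\<in>S. f i = u} = of_bool (f i \<in> S)" by simp
  qed
  also have "\<dots> = card {i\<in>I. f i \<in> S}" using assms(2) by (simp add: Int_def)
  finally show ?thesis .
qed

lemma connected_inI:
  assumes "v \<in> T" and "\<And>y. y \<in> T \<Longrightarrow> (v, y) \<in> (adj_in E T)\<^sup>*"
  shows "connected_in E T"
proof -
  have "sym ((adj_in E T)\<^sup>*)"
    by (rule sym_rtrancl) (auto simp: sym_def adj_in_def insert_commute)
  then show ?thesis
    using assms unfolding connected_in_def by (blast dest: symD intro: rtrancl_trans)
qed

lemma connected_in_subset_reach:
  assumes "connected_in E T" and "u \<in> T" and "inner_edges E T \<subseteq> E'"
  shows "T \<subseteq> reach E' u"
proof -
  have "adj_in E T \<subseteq> edge_rel E'"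
    using assms(3) by (auto simp: adj_in_def edge_rel_def inner_edges_def)
  then show ?thesis
    using assms(1,2) rtrancl_mono unfolding connected_in_def reach_def by blast
qed

lemma branches_reach:
  "branch E v x = reach (E - {{v, x}}) v" "branch E x v = reach (E - {{v, x}}) x"
  by (simp_all add: branch_def insert_commute)

lemma mem_branch_self [simp]: "v \<in> branch E v x"
  by (simp add: branch_def)

section \<open>Branches of a tree\<close>

locale tree =
  fixes V :: "nat set" and E :: "nat set set"
  assumes finite_V: "finite V"
    and edges_subset: "E \<subseteq> {{u, v} | u v. u \<in> V \<and> v \<in> V \<and> u \<noteq> v}"
    and connected_V: "connected_in E V"
    and card_E: "card E + 1 = card V"
begin

lemma edgeD: "{u, w} \<in> E \<Longrightarrow> u \<in> V \<and> w \<in> V \<and> u \<noteq> w"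
  using edges_subset by (fastforce simp: doubleton_eq_iff)

lemma edge_obtain:
  assumes "g \<in> E"
  obtains u w where "g = {u, w}" and "u \<noteq> w"
  using assms edges_subset by blast

lemma edge_subset_V: "g \<in> E \<Longrightarrow> g \<subseteq> V"
  using edges_subset by blast

lemma card_edge: "g \<in> E \<Longrightarrow> card g = 2"
  by (auto elim: edge_obtain)

lemma finite_E: "finite E"
proof (rule finite_subset[of _ "Pow V"])
  show "E \<subseteq> Pow V" using edges_subset by blast
qed (simp add: finite_V)

lemma V_subset_reach: "u \<in> V \<Longrightarrow> V \<subseteq> reach E u"
  using connected_V by (rule connected_in_subset_reach) (auto simp: inner_edges_def)

lemma branch_subset_V: "v \<in> V \<Longrightarrow> branch E v x \<subseteq> V"
  using reach_subset_Union[of "E - {{v, x}}" v] edges_subset by (auto simp: branch_def)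

lemma finite_branch: "v \<in> V \<Longrightarrow> finite (branch E v x)"
  using branch_subset_V finite_V finite_subset by blast

lemma branches_cover:
  assumes "{v, x} \<in> E"
  shows "V = branch E v x \<union> branch E x v"
proof
  show "V \<subseteq> branch E v x \<union> branch E x v"
  proof
    fix y assume "y \<in> V"
    then have "y \<in> reach E v" using V_subset_reach edgeD[OF assms] by blast
    then show "y \<in> branch E v x \<union> branch E x v"
      unfolding branches_reach[where v = v and x = x]
    proof (induction rule: reach_induct)
      case (step z z')
      show ?case
      proof (cases "{z, z'} = {v, x}")
        case True
        then show ?thesis by (auto simp: doubleton_eq_iff)
      next
        case False
        then have "{z, z'} \<in> E - {{v, x}}" using step.hyps(2) by blast
        then show ?thesis using step.IH reach_step[of z _ _ z'] by blast
      qed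
    qed simp
  qed
qed (use branch_subset_V edgeD[OF assms] in blast)

text \<open>If the branches met, the card V - 2 edges of E - {{v, x}} would connect V, contradicting
  card_reach_le.\<close>

lemma branches_disjoint:
  assumes vx: "{v, x} \<in> E"
  shows "branch E v x \<inter> branch E x v = {}"
proof (rule ccontr)
  let ?E' = "E - {{v, x}}"
  assume "branch E v x \<inter> branch E x v \<noteq> {}"
  then obtain y where y: "y \<in> reach ?E' v" "y \<in> reach ?E' x"
    unfolding branches_reach[where v = v and x = x] by blast
  have "x \<in> reach ?E' v" using reach_trans[OF y(1) reach_sym[OF y(2)]] .
  then have "reach ?E' x = reach ?E' v" by (rule reach_eq)
  then have "V \<subseteq> branch E v x"
    using branches_cover[OF vx] unfolding branches_reach[where v = v and x = x] by simp
  then have "card V \<le> card (branch E v x)"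
    using finite_branch edgeD[OF vx] by (blast intro: card_mono)
  also have "\<dots> \<le> card (inner_edges ?E' (reach ?E' v)) + 1"
    unfolding branch_def using finite_E card_edge by (intro card_reach_le) auto
  also have "\<dots> \<le> card ?E' + 1"
    using finite_E by (intro add_right_mono card_mono) (auto simp: inner_edges_def)
  also have "\<dots> < card V"
  proof -
    have "card E > 0" using vx finite_E card_gt_0_iff by blast
    then show ?thesis using card_E vx finite_E by simp
  qed
  finally show False by simp
qed

lemma endpoint_notin_branch:
  assumes "{v, x} \<in> E"
  shows "x \<notin> branch E v x"
proof
  assume "x \<in> branch E v x"
  moreover have "x \<in> branch E x v" by simp
  ultimately show False using branches_disjoint[OF assms] by blast
qed

lemma card_branch:
  assumes vx: "{v, x} \<in> E"
  shows "card (branch E v x) = card (inner_edges E (branch E v x)) + 1"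
proof -
  let ?E' = "E - {{v, x}}"
  let ?S = "reach ?E' v" and ?W = "reach ?E' x"
  have vx_V: "v \<in> V" "x \<in> V" using edgeD[OF vx] by auto
  have disj: "?S \<inter> ?W = {}" and cover: "V = ?S \<union> ?W"
    using branches_disjoint[OF vx] branches_cover[OF vx]
    unfolding branches_reach[where v = v and x = x] by auto
  have x_S: "x \<notin> ?S" using disj reach_self[of x ?E'] by blast
  have v_W: "v \<notin> ?W" using disj reach_self[of v ?E'] by blast
  have inner: "inner_edges E ?S = inner_edges ?E' ?S" "inner_edges E ?W = inner_edges ?E' ?W"
    using x_S v_W by (auto simp: inner_edges_def)
  have card_le: "card (reach ?E' y) \<le> card (inner_edges ?E' (reach ?E' y)) + 1" for y
    using finite_E card_edge by (intro card_reach_le) auto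
  have "{} \<notin> E" using card_edge by force
  then have "card (insert {v, x} (inner_edges E ?S \<union> inner_edges E ?W))
      = card (inner_edges E ?S) + card (inner_edges E ?W) + 1"
    using x_S v_W finite_E card_inner_edges_Un_disjoint[OF finite_E _ disj]
    by (simp add: inner_edges_def)
  moreover have "insert {v, x} (inner_edges E ?S \<union> inner_edges E ?W) \<subseteq> E"
    using vx by (auto simp: inner_edges_def)
  then have "card (insert {v, x} (inner_edges E ?S \<union> inner_edges E ?W)) \<le> card E"
    by (rule card_mono[OF finite_E])
  moreover have "finite ?S" "finite ?W"
    using finite_branch[of v x] finite_branch[of x v] vx_V
    unfolding branches_reach[where v = v and x = x] by blast+
  then have "card V = card ?S + card ?W"
    using cover disj by (simp add: card_Un_disjoint)
  ultimately show ?thesis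
    using card_le[of v] card_le[of x] card_E
    unfolding inner branches_reach[where v = v and x = x] by linarith
qed

lemma connected_branch:
  assumes "v \<in> V"
  shows "connected_in E (branch E v x)"
proof (rule connected_inI)
  show "v \<in> branch E v x" by simp
  fix y assume "y \<in> branch E v x"
  then show "(v, y) \<in> (adj_in E (branch E v x))\<^sup>*"
    unfolding branch_def
  proof (induction rule: reach_induct)
    case (step z z')
    then have "(z, z') \<in> adj_in E (reach (E - {{v, x}}) v)"
      by (auto simp: adj_in_def intro: reach_step)
    with step.IH show ?case by (rule rtrancl_into_rtrancl)
  qed simp
qed

lemma branch_crossing:
  assumes vx: "{v, x} \<in> E"
  shows "{g\<in>E. g \<inter> branch E v x \<noteq> {} \<and> g \<inter> (V - branch E v x) \<noteq> {}} = {{v, x}}"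
    (is "?C = _")
proof
  have "{v, x} \<inter> (V - branch E v x) \<noteq> {}"
    using endpoint_notin_branch[OF vx] edgeD[OF vx] by blast
  moreover have "{v, x} \<inter> branch E v x \<noteq> {}" by auto
  ultimately show "{{v, x}} \<subseteq> ?C" using vx by simp
  show "?C \<subseteq> {{v, x}}"
  proof
    fix g assume g: "g \<in> ?C"
    show "g \<in> {{v, x}}"
    proof (rule ccontr)
      assume "g \<notin> {{v, x}}"
      with g have g': "g \<in> E - {{v, x}}" by blast
      obtain a b where ab: "g = {a, b}" "a \<noteq> b" using g' edge_obtain[of g] by blast
      have ab': "{a, b} \<in> E - {{v, x}}" "{b, a} \<in> E - {{v, x}}"
        using g' ab by (simp_all add: insert_commute)
      have "a \<in> branch E v x \<longleftrightarrow> b \<in> branch E v x"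
        unfolding branch_def using reach_step[OF _ ab'(1)] reach_step[OF _ ab'(2)] by blast
      moreover have "g \<inter> branch E v x \<noteq> {}" "g \<inter> (V - branch E v x) \<noteq> {}" using g by auto
      ultimately show False unfolding ab(1) by blast
    qed
  qed
qed

lemma tail_iff_branch:
  "(T \<subseteq> V \<and> connected_in E T \<and> card {g\<in>E. g \<inter> T \<noteq> {} \<and> g \<inter> (V - T) \<noteq> {}} = 1)
    \<longleftrightarrow> (\<exists>v x. {v, x} \<in> E \<and> T = branch E v x)"
proof
  assume "T \<subseteq> V \<and> connected_in E T \<and> card {g\<in>E. g \<inter> T \<noteq> {} \<and> g \<inter> (V - T) \<noteq> {}} = 1"
  then have T: "T \<subseteq> V" "connected_in E T"
    and one: "card {g\<in>E. g \<inter> T \<noteq> {} \<and> g \<inter> (V - T) \<noteq> {}} = 1" by auto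
  obtain e where crossing: "{g\<in>E. g \<inter> T \<noteq> {} \<and> g \<inter> (V - T) \<noteq> {}} = {e}"
    using card_1_singletonE[OF one] by blast
  then have "e \<in> E" "e \<inter> T \<noteq> {}" "e \<inter> (V - T) \<noteq> {}" by auto
  then obtain v x where e: "e = {v, x}" "v \<in> T" "x \<notin> T"
    by (auto elim!: edge_obtain simp: insert_commute)
  have "T \<subseteq> branch E v x"
    unfolding branch_def using T e by (intro connected_in_subset_reach) (auto simp: inner_edges_def)
  moreover have "branch E v x \<subseteq> T"
  proof
    fix y assume "y \<in> branch E v x"
    then show "y \<in> T"
      unfolding branch_def
    proof (induction rule: reach_induct)
      case (step z z')
      show ?case
      proof (rule ccontr)
        assume "z' \<notin> T"
        with step have "{z, z'} \<in> {g\<in>E. g \<inter> T \<noteq> {} \<and> g \<inter> (V - T) \<noteq> {}}"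
          using edgeD[of z z'] by auto
        with crossing e step.hyps(2) show False by auto
      qed
    qed (use e in simp)
  qed
  ultimately show "\<exists>v x. {v, x} \<in> E \<and> T = branch E v x" using \<open>e \<in> E\<close> e by blast
next
  assume "\<exists>v x. {v, x} \<in> E \<and> T = branch E v x"
  then obtain v x where "{v, x} \<in> E" "T = branch E v x" by blast
  then show "T \<subseteq> V \<and> connected_in E T \<and> card {g\<in>E. g \<inter> T \<noteq> {} \<and> g \<inter> (V - T) \<noteq> {}} = 1"
    using branch_subset_V connected_branch branch_crossing edgeD by simp
qed

lemma branch_psubset:
  assumes vx: "{v, x} \<in> E" and xy: "{x, y} \<in> E" and "y \<noteq> v"
  shows "branch E v x \<subset> branch E x y"
proof -
  have x_notin: "x \<notin> branch E v x" using endpoint_notin_branch[OF vx] .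
  moreover have "y \<notin> branch E v x"
  proof
    assume "y \<in> branch E v x"
    moreover have "{y, x} \<in> E - {{v, x}}"
      using xy \<open>y \<noteq> v\<close> by (auto simp: insert_commute doubleton_eq_iff)
    ultimately have "x \<in> branch E v x" unfolding branch_def by (rule reach_step)
    with x_notin show False ..
  qed
  ultimately have "branch E v x = reach (E - {{v, x}} - {{x, y}}) v"
    unfolding branch_def by (intro reach_Diff_edge[symmetric]) auto
  also have "\<dots> \<subseteq> reach (E - {{x, y}}) v" by (rule reach_mono) blast
  also have "\<dots> = branch E x y"
  proof -
    have "{x, v} \<in> E - {{x, y}}"
      using vx \<open>y \<noteq> v\<close> by (auto simp: insert_commute doubleton_eq_iff)
    then have "v \<in> branch E x y" unfolding branch_def by (rule reach_step[OF reach_self])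
    then show ?thesis unfolding branch_def by (rule reach_eq)
  qed
  finally show ?thesis using x_notin by (auto simp: branch_def)
qed

text \<open>Take x to be the neighbour of v on a path from v to u that leaves v for the last time:
  then the branch at x towards v contains u and w, so it contains the whole other branch of
  the edge {u, w}.\<close>

lemma branch_at_vertex_subset:
  assumes uw: "{u, w} \<in> E" and v: "v \<in> branch E u w"
  shows "\<exists>x. {v, x} \<in> E \<and> branch E v x \<subseteq> branch E u w"
proof (cases "v = u")
  case True
  then show ?thesis using uw by (intro exI[of _ w]) simp
next
  case False
  let ?E' = "E - {{u, w}}"
  have "u \<in> reach ?E' v" using reach_sym[OF v[unfolded branch_def]] .
  moreover have "u \<noteq> v" using False by simp
  ultimately obtain x where vx: "{v, x} \<in> ?E'" and u_x: "u \<in> reach {g\<in>?E'. v \<notin> g} x"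
    by (blast dest: reach_last_exit)
  have "reach {g\<in>?E'. v \<notin> g} x \<subseteq> branch E x v"
    unfolding branches_reach[where v = v and x = x] by (rule reach_mono) blast
  with u_x have "u \<in> branch E x v" by blast
  moreover have "{u, w} \<in> E - {{v, x}}" using uw vx by blast
  ultimately have w_x: "w \<in> branch E x v"
    unfolding branches_reach[where v = v and x = x] by (rule reach_step)
  have x_u: "x \<in> branch E u w" using v vx unfolding branch_def by (blast intro: reach_step)
  have "{v, x} \<inter> branch E w u = {}" using v x_u branches_disjoint[OF uw] by blast
  then have "branch E w u = reach (?E' - {{v, x}}) w"
    unfolding branches_reach[where v = u and x = w] by (rule reach_Diff_edge[symmetric])
  also have "\<dots> \<subseteq> reach (E - {{v, x}}) w" by (rule reach_mono) blast
  also have "\<dots> = branch E x v"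
    using w_x unfolding branches_reach[where v = v and x = x] by (rule reach_eq)
  finally have "branch E v x \<inter> branch E w u = {}" using branches_disjoint[of v x] vx by blast
  moreover have "branch E v x \<subseteq> V" using branch_subset_V edgeD vx by blast
  ultimately have "branch E v x \<subseteq> branch E u w" using branches_cover[OF uw] by blast
  then show ?thesis using vx by blast
qed

text \<open>A maximal P-branch based in F cannot have its far end in F: the P-branch there would
  strictly contain it (branch_psubset), unless it were the opposite branch of the same edge.\<close>

lemma exists_leaving_edge:
  assumes "F \<subseteq> V" and "F \<noteq> {}"
    and marked: "\<And>v. v \<in> F \<Longrightarrow> \<exists>x. {v, x} \<in> E \<and> P (branch E v x)"
    and not_both: "\<And>v x. {v, x} \<in> E \<Longrightarrow> P (branch E v x) \<Longrightarrow> P (branch E x v) \<Longrightarrow> False"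
  shows "\<exists>v\<in>F. \<exists>x. x \<notin> F \<and> {v, x} \<in> E \<and> P (branch E v x)"
proof (rule ccontr)
  assume none: "\<not> ?thesis"
  let ?B = "{branch E v x | v x. v \<in> F \<and> {v, x} \<in> E \<and> P (branch E v x)}"
  have "?B \<subseteq> Pow V"
  proof
    fix S assume "S \<in> ?B"
    then obtain v x where "v \<in> F" "S = branch E v x" by blast
    then show "S \<in> Pow V" using branch_subset_V \<open>F \<subseteq> V\<close> by blast
  qed
  then have fin: "finite ?B" using finite_V by (simp add: finite_subset)
  obtain v where "v \<in> F" using \<open>F \<noteq> {}\<close> by blast
  with marked obtain x where "{v, x} \<in> E" "P (branch E v x)" by blast
  with \<open>v \<in> F\<close> have ne: "?B \<noteq> {}" by blast
  obtain S where "S \<in> ?B" and maximal: "\<forall>S'\<in>?B. S \<subseteq> S' \<longrightarrow> S = S'"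
    using finite_has_maximal[OF fin ne] by (elim bexE)
  from \<open>S \<in> ?B\<close> obtain v x where v: "v \<in> F" and vx: "{v, x} \<in> E" "P (branch E v x)"
    and S: "S = branch E v x"
    by blast
  have "x \<in> F" using none v vx by blast
  then obtain y where xy: "{x, y} \<in> E" "P (branch E x y)" using marked by blast
  have "y \<noteq> v" using not_both vx xy by (auto simp: insert_commute)
  then have "S \<subset> branch E x y" using branch_psubset vx(1) xy(1) S by blast
  moreover have "branch E x y \<in> ?B" using \<open>x \<in> F\<close> xy by blast
  ultimately show False using maximal by blast
qed

lemma card_edge_Int_branch:
  assumes vx: "{v, x} \<in> E" and g: "g \<in> E"
  shows "card (g \<inter> branch E v x)
    = 2 * of_bool (g \<in> inner_edges E (branch E v x)) + of_bool (g = {v, x})"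
proof -
  let ?S = "branch E v x"
  have x_S: "x \<notin> ?S" using endpoint_notin_branch[OF vx] .
  have "g = {v, x}" if "g \<inter> ?S \<noteq> {}" and "\<not> g \<subseteq> ?S"
  proof -
    have "g \<inter> (V - ?S) \<noteq> {}" using that(2) edge_subset_V[OF g] by blast
    then have "g \<in> {g\<in>E. g \<inter> ?S \<noteq> {} \<and> g \<inter> (V - ?S) \<noteq> {}}" using g that(1) by blast
    then show ?thesis unfolding branch_crossing[OF vx] by simp
  qed
  then consider (inner) "g \<subseteq> ?S" | (crossing) "g = {v, x}" | (outer) "g \<inter> ?S = {}"
    by blast
  then show ?thesis
  proof cases
    case inner
    then have "g \<noteq> {v, x}" using x_S by blast
    then show ?thesis using inner g card_edge[OF g] by (simp add: inner_edges_def Int_absorb2)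
  next
    case crossing
    then have "g \<inter> ?S = {v}" using x_S by auto
    then show ?thesis using crossing x_S by (simp add: inner_edges_def)
  next
    case outer
    have "g \<noteq> {}" using card_edge[OF g] by (intro notI) simp
    then have "\<not> g \<subseteq> ?S" using outer by blast
    moreover have "g \<noteq> {v, x}" using outer mem_branch_self[of v E x] by blast
    ultimately show ?thesis using outer by (simp add: inner_edges_def)
  qed
qed

text \<open>Each inner edge of the branch counts twice and the edge {v, x} once; by card_branch
  there is one inner edge less than there are vertices.\<close>

lemma sum_degree_branch:
  assumes vx: "{v, x} \<in> E"
  shows "(\<Sum>u\<in>branch E v x. card {g\<in>E. u \<in> g}) = 2 * card (branch E v x) - 1"
proof -
  let ?S = "branch E v x"
  have fin_S: "finite ?S" using finite_branch edgeD[OF vx] by blast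
  have "(\<Sum>u\<in>?S. card {g\<in>E. u \<in> g}) = (\<Sum>g\<in>E. card (g \<inter> ?S))"
    using sum_card_Collect_swap[OF fin_S finite_E, of "\<lambda>u g. u \<in> g"]
    by (simp add: Int_def conj_commute)
  also have "\<dots> = (\<Sum>g\<in>E. 2 * of_bool (g \<in> inner_edges E ?S) + of_bool (g = {v, x}))"
    using card_edge_Int_branch[OF vx] by (rule sum.cong[OF refl])
  also have "\<dots> = 2 * card (inner_edges E ?S) + 1"
  proof -
    have "{g. g = {v, x} \<and> g \<in> E} = {{v, x}}" using vx by blast
    then show ?thesis
      using finite_E by (simp add: sum.distrib sum_distrib_left[symmetric] inner_edges_def Int_def)
  qed
  also have "\<dots> = 2 * card ?S - 1" using card_branch[OF vx] by simp
  finally show ?thesis .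
qed

lemma two_le_card_labels_branch:
  fixes lf :: "nat \<Rightarrow> nat"
  assumes vx: "{v, x} \<in> E" and "finite I"
    and deg: "\<And>u. u \<in> V \<Longrightarrow> 3 \<le> card {g\<in>E. u \<in> g} + card {i\<in>I. lf i = u}"
  shows "2 \<le> card {i\<in>I. lf i \<in> branch E v x}"
proof -
  let ?S = "branch E v x"
  have v_V: "v \<in> V" using edgeD[OF vx] by blast
  have fin_S: "finite ?S" using finite_branch[OF v_V] .
  have "?S \<noteq> {}" using mem_branch_self[of v E x] by blast
  then have "card ?S \<ge> 1" using fin_S by (simp add: Suc_le_eq card_gt_0_iff)
  have "(\<Sum>u\<in>?S. 3) \<le> (\<Sum>u\<in>?S. card {g\<in>E. u \<in> g} + card {i\<in>I. lf i = u})"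
    using deg branch_subset_V[OF v_V] by (intro sum_mono) blast
  then show ?thesis
    using sum_degree_branch[OF vx] sum_card_preimage[OF fin_S \<open>finite I\<close>, of lf] \<open>card ?S \<ge> 1\<close>
    by (simp add: sum.distrib)
qed

end

section \<open>Light branches of a stable tree\<close>

lemma tree_stable_tree: "stable_tree n G \<Longrightarrow> tree (verts G) (edges G)"
  unfolding stable_tree_def tree_def by blast

lemma leaf_in_verts: "stable_tree n G \<Longrightarrow> i \<in> {1..n} \<Longrightarrow> leaf G i \<in> verts G"
  unfolding stable_tree_def by blast

lemma is_tail_iff_branch:
  assumes "stable_tree n G"
  shows "is_tail G T \<longleftrightarrow> (\<exists>v x. {v, x} \<in> edges G \<and> T = branch (edges G) v x)"
  unfolding is_tail_def using tree.tail_iff_branch[OF tree_stable_tree[OF assms]] by blast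

definition light :: "nat \<Rightarrow> (nat \<Rightarrow> rat) \<Rightarrow> stree \<Rightarrow> nat set \<Rightarrow> bool" where
  "light n a G T \<longleftrightarrow> (\<Sum>i\<in>tail_labels n G T. a i) \<le> 1"

lemma weight_assignment_altdef:
  "weight_assignment n a G = {v\<in>verts G. \<exists>T. is_tail G T \<and> v \<in> T \<and> light n a G T}"
  by (simp add: weight_assignment_def light_def)

lemma light_subset:
  assumes "weight_data n a" and "T \<subseteq> T'" and "light n a G T'"
  shows "light n a G T"
proof -
  have "(\<Sum>i\<in>tail_labels n G T. a i) \<le> (\<Sum>i\<in>tail_labels n G T'. a i)"
    using assms(1,2) unfolding weight_data_def tail_labels_def
    by (intro sum_mono2) (auto intro: less_imp_le)
  then show ?thesis using assms(3) by (simp add: light_def)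
qed

lemma not_light_both_branches:
  assumes "weight_data n a" and G: "stable_tree n G" and vx: "{v, x} \<in> edges G"
  shows "\<not> (light n a G (branch (edges G) v x) \<and> light n a G (branch (edges G) x v))"
proof -
  interpret tree "verts G" "edges G" using tree_stable_tree[OF G] .
  let ?L = "\<lambda>T. tail_labels n G T"
  have "leaf G i \<in> branch (edges G) v x \<union> branch (edges G) x v" if "i \<in> {1..n}" for i
    using branches_cover[OF vx] leaf_in_verts[OF G that] by blast
  then have "?L (branch (edges G) v x) \<union> ?L (branch (edges G) x v) = {1..n}"
    unfolding tail_labels_def by blast
  moreover have "?L (branch (edges G) v x) \<inter> ?L (branch (edges G) x v) = {}"
    using branches_disjoint[OF vx] by (auto simp: tail_labels_def)
  ultimately have "(\<Sum>i\<in>?L (branch (edges G) v x). a i) + (\<Sum>i\<in>?L (branch (edges G) x v). a i)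
      = (\<Sum>i\<in>{1..n}. a i)"
    by (metis finite_atLeastAtMost finite_Un sum.union_disjoint)
  then show ?thesis using assms(1) by (auto simp: light_def weight_data_def)
qed

lemma light_branch_subset_weight_assignment:
  assumes G: "stable_tree n G" and vx: "{v, x} \<in> edges G"
    and "light n a G (branch (edges G) v x)"
  shows "branch (edges G) v x \<subseteq> weight_assignment n a G"
proof -
  interpret tree "verts G" "edges G" using tree_stable_tree[OF G] .
  have "is_tail G (branch (edges G) v x)" using is_tail_iff_branch[OF G] vx by blast
  moreover have "branch (edges G) v x \<subseteq> verts G" using branch_subset_V edgeD[OF vx] by blast
  ultimately show ?thesis using assms(3) by (auto simp: weight_assignment_altdef)
qed

lemma weight_assignment_light_branch:
  assumes "weight_data n a" and G: "stable_tree n G" and "v \<in> weight_assignment n a G"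
  shows "\<exists>x. {v, x} \<in> edges G \<and> light n a G (branch (edges G) v x)"
proof -
  interpret tree "verts G" "edges G" using tree_stable_tree[OF G] .
  obtain T where T: "is_tail G T" "v \<in> T" "light n a G T"
    using assms(3) by (auto simp: weight_assignment_altdef)
  then obtain u w where uw: "{u, w} \<in> edges G" "T = branch (edges G) u w"
    using is_tail_iff_branch[OF G] by blast
  then obtain x where "{v, x} \<in> edges G" "branch (edges G) v x \<subseteq> T"
    using branch_at_vertex_subset T(2) by blast
  then show ?thesis using light_subset[OF assms(1) _ T(3)] by blast
qed

lemma weight_assignment_ne_verts:
  assumes "weight_data n a" and G: "stable_tree n G"
  shows "weight_assignment n a G \<noteq> verts G"
proof
  interpret tree "verts G" "edges G" using tree_stable_tree[OF G] .
  assume all: "weight_assignment n a G = verts G"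
  have "verts G \<noteq> {}" using connected_V by (simp add: connected_in_def)
  then obtain v x where "x \<notin> verts G" "{v, x} \<in> edges G"
    using exists_leaving_edge[of "verts G" "light n a G"]
      weight_assignment_light_branch[OF assms] not_light_both_branches[OF assms] all
    by blast
  then show False using edgeD by blast
qed

section \<open>Contractions\<close>

lemma contractsD:
  assumes "contracts n G G' \<pi>"
  shows "stable_tree n G" and "stable_tree n G'" and "\<pi> ` verts G = verts G'"
    and "v' \<in> verts G' \<Longrightarrow> connected_in (edges G) {v\<in>verts G. \<pi> v = v'}"
    and "i \<in> {1..n} \<Longrightarrow> leaf G' i = \<pi> (leaf G i)"
    and "edges G' = {{\<pi> u, \<pi> v} | u v. {u, v} \<in> edges G \<and> \<pi> u \<noteq> \<pi> v}"
  using assms unfolding contracts_def by simp_all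

lemma contracts_edge_image:
  assumes "contracts n G G' \<pi>" and "{u, w} \<in> edges G" and "\<pi> u \<noteq> \<pi> w"
  shows "{\<pi> u, \<pi> w} \<in> edges G'"
  using assms(2,3) unfolding contractsD(6)[OF assms(1)] by blast

lemma contracts_edge_lift:
  assumes "contracts n G G' \<pi>" and "{a, b} \<in> edges G'"
  obtains p q where "\<pi> p = a" and "\<pi> q = b" and "{p, q} \<in> edges G"
proof -
  obtain c d where "{a, b} = {\<pi> c, \<pi> d}" and cd: "{c, d} \<in> edges G"
    using assms(2) unfolding contractsD(6)[OF assms(1)] by blast
  then have "(\<pi> c = a \<and> \<pi> d = b) \<or> (\<pi> d = a \<and> \<pi> c = b)" by (auto simp: doubleton_eq_iff)
  moreover have "{d, c} \<in> edges G" using cd by (simp add: insert_commute)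
  ultimately show ?thesis using that cd by blast
qed

lemma fibre_subset_branch:
  assumes ct: "contracts n G G' \<pi>" and "\<pi> p \<noteq> \<pi> q"
    and c: "c \<in> branch (edges G) p q" "c \<in> verts G"
  shows "{y\<in>verts G. \<pi> y = \<pi> c} \<subseteq> branch (edges G) p q"
proof -
  have "\<pi> c \<in> verts G'" using contractsD(3)[OF ct] c(2) by blast
  then have "connected_in (edges G) {y\<in>verts G. \<pi> y = \<pi> c}" by (rule contractsD(4)[OF ct])
  moreover have "inner_edges (edges G) {y\<in>verts G. \<pi> y = \<pi> c} \<subseteq> edges G - {{p, q}}"
    using \<open>\<pi> p \<noteq> \<pi> q\<close> by (auto simp: inner_edges_def)
  ultimately have "{y\<in>verts G. \<pi> y = \<pi> c} \<subseteq> reach (edges G - {{p, q}}) c"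
    using c(2) by (intro connected_in_subset_reach) auto
  also have "\<dots> = branch (edges G) p q" using c(1) unfolding branch_def by (rule reach_eq)
  finally show ?thesis .
qed

text \<open>Walk along the branch in G' starting at \<pi> p: every edge of the walk lifts to an edge of G
  other than {p, q}, and whole fibres follow by fibre_subset_branch.\<close>

lemma vimage_branch_subset:
  assumes ct: "contracts n G G' \<pi>" and pq: "{p, q} \<in> edges G" and "\<pi> p \<noteq> \<pi> q"
  shows "{y\<in>verts G. \<pi> y \<in> branch (edges G') (\<pi> p) (\<pi> q)} \<subseteq> branch (edges G) p q"
proof -
  interpret tree "verts G" "edges G" using tree_stable_tree[OF contractsD(1)[OF ct]] .
  have "{y\<in>verts G. \<pi> y = z} \<subseteq> branch (edges G) p q"
    if "z \<in> reach (edges G' - {{\<pi> p, \<pi> q}}) (\<pi> p)" for z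
    using that
  proof (induction rule: reach_induct)
    case base
    show ?case using fibre_subset_branch[OF ct \<open>\<pi> p \<noteq> \<pi> q\<close>] pq edgeD by simp
  next
    case (step z z')
    then obtain c d where cd: "\<pi> c = z" "\<pi> d = z'" "{c, d} \<in> edges G"
      using contracts_edge_lift[OF ct] by blast
    have "c \<in> branch (edges G) p q" using step.IH cd edgeD by blast
    moreover have "{c, d} \<in> edges G - {{p, q}}" using step.hyps(2) cd by auto
    ultimately have d: "d \<in> branch (edges G) p q" unfolding branch_def by (rule reach_step)
    have "d \<in> verts G" using edgeD[OF cd(3)] by blast
    then show ?case using fibre_subset_branch[OF ct \<open>\<pi> p \<noteq> \<pi> q\<close> d] cd(2) by simp
  qed
  then show ?thesis unfolding branch_def by blast
qed

lemma vimage_branch: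
  assumes ct: "contracts n G G' \<pi>" and pq: "{p, q} \<in> edges G" and "\<pi> p \<noteq> \<pi> q"
  shows "{y\<in>verts G. \<pi> y \<in> branch (edges G') (\<pi> p) (\<pi> q)} = branch (edges G) p q"
proof
  interpret G: tree "verts G" "edges G" using tree_stable_tree[OF contractsD(1)[OF ct]] .
  interpret G': tree "verts G'" "edges G'" using tree_stable_tree[OF contractsD(2)[OF ct]] .
  show "branch (edges G) p q \<subseteq> {y\<in>verts G. \<pi> y \<in> branch (edges G') (\<pi> p) (\<pi> q)}"
  proof
    fix y assume y: "y \<in> branch (edges G) p q"
    then have "y \<in> verts G" using G.branch_subset_V[of p q] G.edgeD[OF pq] by blast
    then have "\<pi> y \<in> verts G'" using contractsD(3)[OF ct] by blast
    moreover have "\<pi> y \<notin> branch (edges G') (\<pi> q) (\<pi> p)"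
    proof
      assume "\<pi> y \<in> branch (edges G') (\<pi> q) (\<pi> p)"
      moreover have "{q, p} \<in> edges G" using pq by (simp add: insert_commute)
      ultimately have "y \<in> branch (edges G) q p"
        using vimage_branch_subset[OF ct _ \<open>\<pi> p \<noteq> \<pi> q\<close>[symmetric]] \<open>y \<in> verts G\<close>
        by (blast dest: subsetD)
      then show False using y G.branches_disjoint[OF pq] by blast
    qed
    ultimately show "y \<in> {y\<in>verts G. \<pi> y \<in> branch (edges G') (\<pi> p) (\<pi> q)}"
      using G'.branches_cover[OF contracts_edge_image[OF ct pq \<open>\<pi> p \<noteq> \<pi> q\<close>]] \<open>y \<in> verts G\<close>
      by blast
  qed
qed (rule vimage_branch_subset[OF assms])

lemma light_vimage_branch:
  assumes ct: "contracts n G G' \<pi>" and pq: "{p, q} \<in> edges G" and "\<pi> p \<noteq> \<pi> q"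
  shows "light n a G' (branch (edges G') (\<pi> p) (\<pi> q)) \<longleftrightarrow> light n a G (branch (edges G) p q)"
proof -
  have "leaf G' i \<in> branch (edges G') (\<pi> p) (\<pi> q) \<longleftrightarrow> leaf G i \<in> branch (edges G) p q"
    if i: "i \<in> {1..n}" for i
  proof -
    have "leaf G i \<in> branch (edges G) p q
        \<longleftrightarrow> leaf G i \<in> {y\<in>verts G. \<pi> y \<in> branch (edges G') (\<pi> p) (\<pi> q)}"
      unfolding vimage_branch[OF assms] ..
    then show ?thesis
      using leaf_in_verts[OF contractsD(1)[OF ct] i] contractsD(5)[OF ct i] by simp
  qed
  then have "tail_labels n G' (branch (edges G') (\<pi> p) (\<pi> q)) = tail_labels n G (branch (edges G) p q)"
    unfolding tail_labels_def by blast
  then show ?thesis by (simp add: light_def)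
qed

lemma fibre_subset_weight_assignment:
  assumes wd: "weight_data n a" and ct: "contracts n G G' \<pi>"
    and v': "v' \<in> weight_assignment n a G'"
  shows "{v\<in>verts G. \<pi> v = v'} \<subseteq> weight_assignment n a G"
proof -
  have G: "stable_tree n G" and G': "stable_tree n G'" using contractsD(1,2)[OF ct] .
  obtain x' where vx': "{v', x'} \<in> edges G'" and light': "light n a G' (branch (edges G') v' x')"
    using weight_assignment_light_branch[OF wd G' v'] by blast
  then obtain p q where pq: "\<pi> p = v'" "\<pi> q = x'" "{p, q} \<in> edges G"
    using contracts_edge_lift[OF ct] by metis
  have "\<pi> p \<noteq> \<pi> q" using tree.edgeD[OF tree_stable_tree[OF G'] vx'] pq by simp
  have "p \<in> verts G" using tree.edgeD[OF tree_stable_tree[OF G] pq(3)] by blast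
  then have "{v\<in>verts G. \<pi> v = v'} \<subseteq> branch (edges G) p q"
    using fibre_subset_branch[OF ct \<open>\<pi> p \<noteq> \<pi> q\<close> mem_branch_self] pq(1) by simp
  also have "\<dots> \<subseteq> weight_assignment n a G"
    using light_vimage_branch[OF ct pq(3) \<open>\<pi> p \<noteq> \<pi> q\<close>] light' pq
    by (intro light_branch_subset_weight_assignment[OF G pq(3)]) simp
  finally show ?thesis .
qed

lemma weight_assignment_if_fibre_subset:
  assumes wd: "weight_data n a" and ct: "contracts n G G' \<pi>" and v': "v' \<in> verts G'"
    and fibre: "{v\<in>verts G. \<pi> v = v'} \<subseteq> weight_assignment n a G"
  shows "v' \<in> weight_assignment n a G'"
proof -
  have G: "stable_tree n G" and G': "stable_tree n G'" using contractsD(1,2)[OF ct] .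
  interpret G: tree "verts G" "edges G" using tree_stable_tree[OF G] .
  let ?F = "{v\<in>verts G. \<pi> v = v'}"
  have "v' \<in> \<pi> ` verts G" using v' contractsD(3)[OF ct] by simp
  then have "?F \<noteq> {}" by blast
  moreover have "\<exists>x. {v, x} \<in> edges G \<and> light n a G (branch (edges G) v x)" if "v \<in> ?F" for v
    using weight_assignment_light_branch[OF wd G] fibre that by blast
  ultimately obtain v x where v: "v \<in> ?F" and x: "x \<notin> ?F" and vx: "{v, x} \<in> edges G"
    and light: "light n a G (branch (edges G) v x)"
    using G.exists_leaving_edge[of ?F "light n a G"] not_light_both_branches[OF wd G] by blast
  have "\<pi> v \<noteq> \<pi> x" using v x G.edgeD[OF vx] by simp
  then have "light n a G' (branch (edges G') (\<pi> v) (\<pi> x))"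
    using light_vimage_branch[OF ct vx] light by simp
  then have "branch (edges G') (\<pi> v) (\<pi> x) \<subseteq> weight_assignment n a G'"
    by (rule light_branch_subset_weight_assignment[OF G' contracts_edge_image[OF ct vx \<open>\<pi> v \<noteq> \<pi> x\<close>]])
  then show "v' \<in> weight_assignment n a G'"
    using v mem_branch_self[of "\<pi> v" "edges G'" "\<pi> x"] by blast
qed

section \<open>Contraction onto an edge\<close>

definition two_vertex_tree :: "(nat \<Rightarrow> nat) \<Rightarrow> stree" where
  "two_vertex_tree l = \<lparr>verts = {0, 1}, edges = {{0, 1}}, leaf = l\<rparr>"

lemma stable_two_vertex_tree:
  assumes "\<And>i. i \<in> {1..n} \<Longrightarrow> l i \<in> {0, 1}"
    and "2 \<le> card {i\<in>{1..n}. l i = 0}" and "2 \<le> card {i\<in>{1..n}. l i = 1}"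
  shows "stable_tree n (two_vertex_tree l)"
proof -
  have "(0, 1) \<in> adj_in {{0, 1}} {0, 1::nat}" by (simp add: adj_in_def)
  then have "connected_in {{0, 1}} {0, 1::nat}" by (intro connected_inI[of 0]) auto
  moreover have "{g\<in>{{0, 1::nat}}. u \<in> g} = {{0, 1}}" if "u \<in> {0, 1}" for u
    using that by auto
  ultimately show ?thesis
    using assms unfolding stable_tree_def two_vertex_tree_def by auto
qed

lemma image_edges_two_valued:
  assumes "{v, x} \<in> E" and "\<pi> v = 0" and "\<pi> x = 1" and "\<And>y. \<pi> y \<in> {0, 1::nat}"
  shows "{{\<pi> u, \<pi> w} | u w. {u, w} \<in> E \<and> \<pi> u \<noteq> \<pi> w} = {{0, 1}}"
proof
  show "{{\<pi> u, \<pi> w} | u w. {u, w} \<in> E \<and> \<pi> u \<noteq> \<pi> w} \<subseteq> {{0, 1}}"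
  proof
    fix g assume "g \<in> {{\<pi> u, \<pi> w} | u w. {u, w} \<in> E \<and> \<pi> u \<noteq> \<pi> w}"
    then obtain u w where "g = {\<pi> u, \<pi> w}" "\<pi> u \<noteq> \<pi> w" by blast
    moreover have "\<pi> u \<in> {0, 1}" "\<pi> w \<in> {0, 1}" using assms(4) by blast+
    ultimately show "g \<in> {{0, 1}}" by (auto simp: insert_commute)
  qed
  have "{\<pi> v, \<pi> x} \<in> {{\<pi> u, \<pi> w} | u w. {u, w} \<in> E \<and> \<pi> u \<noteq> \<pi> w}"
    using assms(1-3) by (intro CollectI exI[of _ v] exI[of _ x]) simp
  then show "{{0, 1}} \<subseteq> {{\<pi> u, \<pi> w} | u w. {u, w} \<in> E \<and> \<pi> u \<noteq> \<pi> w}"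
    using assms(2,3) by simp
qed

lemma contracts_two_vertex_tree:
  assumes G: "stable_tree n G" and vx: "{v, x} \<in> edges G"
  defines "\<pi> \<equiv> \<lambda>y. if y \<in> branch (edges G) v x then 0 else 1"
  shows "contracts n G (two_vertex_tree (\<pi> \<circ> leaf G)) \<pi>"
proof -
  interpret tree "verts G" "edges G" using tree_stable_tree[OF G] .
  let ?S = "branch (edges G) v x" and ?W = "branch (edges G) x v"
  have cover: "verts G = ?S \<union> ?W" and disj: "?S \<inter> ?W = {}"
    using branches_cover[OF vx] branches_disjoint[OF vx] .
  have xv: "{x, v} \<in> edges G" using vx by (simp add: insert_commute)
  have \<pi>01: "\<pi> v = 0" "\<pi> x = 1" using endpoint_notin_branch[OF vx] by (simp_all add: \<pi>_def)
  have fibre0: "{y\<in>verts G. \<pi> y = 0} = ?S" and fibre1: "{y\<in>verts G. \<pi> y = 1} = ?W"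
    using cover disj by (auto simp: \<pi>_def)
  have deg: "3 \<le> card {g\<in>edges G. u \<in> g} + card {i\<in>{1..n}. leaf G i = u}" if "u \<in> verts G" for u
    using G that unfolding stable_tree_def by blast
  have "2 \<le> card {i\<in>{1..n}. leaf G i \<in> ?S}" "2 \<le> card {i\<in>{1..n}. leaf G i \<in> ?W}"
    using two_le_card_labels_branch[OF vx _ deg] two_le_card_labels_branch[OF xv _ deg] by auto
  moreover have "{i\<in>{1..n}. \<pi> (leaf G i) = 0} = {i\<in>{1..n}. leaf G i \<in> ?S}"
    "{i\<in>{1..n}. \<pi> (leaf G i) = 1} = {i\<in>{1..n}. leaf G i \<in> ?W}"
    using fibre0 fibre1 leaf_in_verts[OF G] by blast+
  ultimately have "stable_tree n (two_vertex_tree (\<pi> \<circ> leaf G))"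
    by (intro stable_two_vertex_tree) (auto simp: \<pi>_def)
  moreover have "\<pi> ` verts G = {0, 1}" using \<pi>01 edgeD[OF vx] by (force simp: \<pi>_def)
  moreover have "connected_in (edges G) {y\<in>verts G. \<pi> y = v'}" if "v' \<in> {0, 1}" for v'
    using that fibre0 fibre1 connected_branch edgeD[OF vx] by auto
  moreover have "{{\<pi> u, \<pi> w} | u w. {u, w} \<in> edges G \<and> \<pi> u \<noteq> \<pi> w} = {{0, 1}}"
    using vx \<pi>01 by (intro image_edges_two_valued) (auto simp: \<pi>_def)
  ultimately show ?thesis
    using G unfolding contracts_def two_vertex_tree_def by simp
qed

lemma weight_assignment_smooth:
  assumes wd: "weight_data n a" and G: "stable_tree n G" and v: "v \<in> weight_assignment n a G"
  shows "\<exists>G' \<pi>. card (verts G') = 2 \<and> contracts n G G' \<pi> \<and> \<pi> v \<in> weight_assignment n a G'"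
proof -
  obtain x where vx: "{v, x} \<in> edges G" and light: "light n a G (branch (edges G) v x)"
    using weight_assignment_light_branch[OF wd G v] by blast
  define \<pi> where "\<pi> = (\<lambda>y. if y \<in> branch (edges G) v x then 0 else (1::nat))"
  let ?H = "two_vertex_tree (\<pi> \<circ> leaf G)"
  have ct: "contracts n G ?H \<pi>" unfolding \<pi>_def by (rule contracts_two_vertex_tree[OF G vx])
  have "\<pi> v \<noteq> \<pi> x" using tree.endpoint_notin_branch[OF tree_stable_tree[OF G] vx] by (simp add: \<pi>_def)
  then have "light n a ?H (branch (edges ?H) (\<pi> v) (\<pi> x))"
    using light_vimage_branch[OF ct vx] light by simp
  then have "branch (edges ?H) (\<pi> v) (\<pi> x) \<subseteq> weight_assignment n a ?H"
    by (rule light_branch_subset_weight_assignment[OF contractsD(2)[OF ct]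
          contracts_edge_image[OF ct vx \<open>\<pi> v \<noteq> \<pi> x\<close>]])
  then have "\<pi> v \<in> weight_assignment n a ?H"
    using mem_branch_self[of "\<pi> v" "edges ?H" "\<pi> x"] by blast
  moreover have "card (verts ?H) = 2" by (simp add: two_vertex_tree_def)
  ultimately show ?thesis using ct by blast
qed

theorem lemma7p3:
  fixes n :: nat and a :: "nat \<Rightarrow> rat"
  assumes "weight_data n a"
  shows "extremal_assignment n (weight_assignment n a) \<and> smooth_assignment n (weight_assignment n a)"
proof
  show "extremal_assignment n (weight_assignment n a)"
    unfolding extremal_assignment_def
  proof (intro conjI allI impI ballI)
    fix G assume "stable_tree n G"
    show "weight_assignment n a G \<subseteq> verts G" by (auto simp: weight_assignment_def)
    show "weight_assignment n a G \<noteq> verts G" by (rule weight_assignment_ne_verts) fact+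
  next
    fix G G' \<pi> v' assume ct: "contracts n G G' \<pi>" and v': "v' \<in> verts G'"
    show "v' \<in> weight_assignment n a G' \<longleftrightarrow> (\<forall>v\<in>verts G. \<pi> v = v' \<longrightarrow> v \<in> weight_assignment n a G)"
      using fibre_subset_weight_assignment[OF assms ct] weight_assignment_if_fibre_subset[OF assms ct v']
      by blast
  qed
  show "smooth_assignment n (weight_assignment n a)"
    unfolding smooth_assignment_def using weight_assignment_smooth[OF assms] by blast
qed

end
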